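(* Let $R$ be a real closed field and let $V$ be an affine $R$-variety that is the union of two closed subvarieties $V_1$ and $V_2$ intersecting transversally in a single real point. Let $f\in R[V]$. If $f|_{V_1}$ is a sum of squares in $R[V_1]$ and $f|_{V_2}$ is a sum of squares in $R[V_2]$, then $f$ is a sum of squares in $R[V]$.
   Context: A variety is a reduced separated scheme of finite type, not necessarily irreducible; $R[W]$ denotes the coordinate ring of an affine variety $W$. For closed subvarieties $V_1,V_2$ of an affine $R$-variety $V$ meeting in finitely many points $P_1,\dots,P_r$, the intersection is called transversal if $I_{V_1}+I_{V_2}=\bigcap_{i=1}^r\mathfrak{m}_{P_i}$, where $I_{W}\subset R[V]$ is the vanishing ideal of $W$ and $\mathfrak{m}_P$ is the maximal ideal of the point $P$. A point is real if its residue field is $R$. *)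

theory Defs
  imports "HOL-Algebra.Algebra" "HOL-Computational_Algebra.Polynomial"
begin

text \<open>Real closed field (Artin--Schreier characterisation): -1 is not a sum of
squares, for every x either x or -x is a square, and every polynomial of odd
degree has a root.\<close>
definition real_closed_field :: "'r::field itself \<Rightarrow> bool" where
  "real_closed_field _ \<longleftrightarrow>
     (\<forall>xs :: 'r list. (\<Sum>x\<leftarrow>xs. x * x) \<noteq> - 1) \<and>
     (\<forall>x :: 'r. (\<exists>y. x = y * y) \<or> (\<exists>y. - x = y * y)) \<and>
     (\<forall>p :: 'r poly. odd (Polynomial.degree p) \<longrightarrow> (\<exists>x. poly p x = 0))"

definition sos :: "('a, 'b) ring_scheme \<Rightarrow> 'a \<Rightarrow> bool" where
  "sos A f \<longleftrightarrow> (\<exists>(n::nat) g. g \<in> {..<n} \<rightarrow> carrier A \<and>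
                     f = (\<Oplus>\<^bsub>A\<^esub> i\<in>{..<n}. g i \<otimes>\<^bsub>A\<^esub> g i))"

definition algebra_map :: "('r::field \<Rightarrow> 'a) \<Rightarrow> ('a, 'b) ring_scheme \<Rightarrow> bool" where
  "algebra_map phi A \<longleftrightarrow> cring A \<and> (\<forall>c. phi c \<in> carrier A) \<and>
     phi 0 = \<zero>\<^bsub>A\<^esub> \<and> phi 1 = \<one>\<^bsub>A\<^esub> \<and>
     (\<forall>c d. phi (c + d) = phi c \<oplus>\<^bsub>A\<^esub> phi d) \<and>
     (\<forall>c d. phi (c * d) = phi c \<otimes>\<^bsub>A\<^esub> phi d)"

inductive_set alg_gen :: "('r \<Rightarrow> 'a) \<Rightarrow> ('a, 'b) ring_scheme \<Rightarrow> 'a set \<Rightarrow> 'a set"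
  for phi A S where
  const: "phi c \<in> alg_gen phi A S"
| gen: "s \<in> S \<Longrightarrow> s \<in> alg_gen phi A S"
| add: "x \<in> alg_gen phi A S \<Longrightarrow> y \<in> alg_gen phi A S \<Longrightarrow> x \<oplus>\<^bsub>A\<^esub> y \<in> alg_gen phi A S"
| mult: "x \<in> alg_gen phi A S \<Longrightarrow> y \<in> alg_gen phi A S \<Longrightarrow> x \<otimes>\<^bsub>A\<^esub> y \<in> alg_gen phi A S"

text \<open>Coordinate ring of an affine R-variety: finitely generated reduced R-algebra.\<close>
definition affine_coordinate_ring :: "('r::field \<Rightarrow> 'a) \<Rightarrow> ('a, 'b) ring_scheme \<Rightarrow> bool" where
  "affine_coordinate_ring phi A \<longleftrightarrow> algebra_map phi A \<and>
     (\<exists>S. finite S \<and> S \<subseteq> carrier A \<and> alg_gen phi A S = carrier A) \<and>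
     (\<forall>x\<in>carrier A. \<forall>n::nat. x [^]\<^bsub>A\<^esub> n = \<zero>\<^bsub>A\<^esub> \<longrightarrow> x = \<zero>\<^bsub>A\<^esub>)"

text \<open>Radical ideal = vanishing ideal of a closed subvariety.\<close>
definition radical_ideal :: "'a set \<Rightarrow> ('a, 'b) ring_scheme \<Rightarrow> bool" where
  "radical_ideal I A \<longleftrightarrow> ideal I A \<and>
     (\<forall>x\<in>carrier A. \<forall>n::nat. x [^]\<^bsub>A\<^esub> n \<in> I \<longrightarrow> x \<in> I)"

text \<open>Maximal ideal of a real point: residue field is R (via phi).\<close>
definition real_point_ideal :: "('r::field \<Rightarrow> 'a) \<Rightarrow> 'a set \<Rightarrow> ('a, 'b) ring_scheme \<Rightarrow> bool" where
  "real_point_ideal phi m A \<longleftrightarrow> maximalideal m A \<and>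
     (\<forall>a\<in>carrier A. \<exists>c. a \<ominus>\<^bsub>A\<^esub> phi c \<in> m)"

end

theory Submission
  imports Defs
begin

(*
  Lift f to sums of squares S_i with f = S_i modulo I_i. Because the residue field at the point
  is real closed (a sum of two squares is a square, and vanishes only if both summands do),
  every sum of squares can be rotated, square by square, into the form q^2 + T where T is a sum
  of squares of elements of the maximal ideal m; comparing residues at the point, the leading
  terms q_1, q_2 for S_1, S_2 can be chosen with q_1 = q_2 modulo m = I_1 + I_2.
  Writing q_1 - q_2 = u + v with u in I_1, v in I_2, the element x = q_1 - u = q_2 + v agrees with
  q_1 modulo I_1 and with q_2 modulo I_2; likewise the square of u' + v' in m agrees modulo I_1
  with v'^2, which lies in I_2. This produces one sum of squares s with s = f modulo I_1 and
  modulo I_2, and s = f because I_1 and I_2 meet only in 0.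
*)

inductive_set sums_of_squares :: "('a, 'b) ring_scheme \<Rightarrow> 'a set \<Rightarrow> 'a set" for R P where
  zero: "\<zero>\<^bsub>R\<^esub> \<in> sums_of_squares R P"
| add_square: "s \<in> sums_of_squares R P \<Longrightarrow> x \<in> P \<Longrightarrow> s \<oplus>\<^bsub>R\<^esub> x \<otimes>\<^bsub>R\<^esub> x \<in> sums_of_squares R P"

lemma real_closed_field_sum_two_squares_eq_0:
  assumes "real_closed_field TYPE('r::field)" and "(x::'r) * x + y * y = 0"
  shows "y = 0"
proof (rule ccontr)
  assume "y \<noteq> 0"
  moreover have "x * x = - (y * y)" using assms(2) by (simp add: eq_neg_iff_add_eq_0)
  ultimately have "(\<Sum>z\<leftarrow>[x / y]. z * z) = -1" by simp
  with assms(1) show False unfolding real_closed_field_def by blast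
qed

lemma real_closed_field_sum_two_squares_square:
  assumes "real_closed_field TYPE('r::field)"
  shows "\<exists>e. e * e = (x::'r) * x + y * y"
proof -
  from assms consider e where "x * x + y * y = e * e" | z where "x * x + y * y = - (z * z)"
    unfolding real_closed_field_def by (metis minus_minus)
  then show ?thesis
  proof cases
    case (2 z)
    show ?thesis
    proof (cases "z = 0")
      case True
      with 2 show ?thesis by (intro exI[of _ 0]) simp
    next
      case False
      have "(\<Sum>w\<leftarrow>[x / z, y / z]. w * w) = (x * x + y * y) / (z * z)"
        by (simp add: add_divide_distrib)
      also have "\<dots> = -1" using 2 False by simp
      finally show ?thesis using assms unfolding real_closed_field_def by blast
    qed
  qed metis
qed

lemma field_rotation_coefficients:
  fixes a d e :: "'r::field"
  assumes "e \<noteq> 0" and "e * e = d * d + a * a"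
  obtains \<alpha> \<beta> where "\<alpha> * \<alpha> + \<beta> * \<beta> = 1" "\<alpha> * d + \<beta> * a = e" "\<beta> * d = \<alpha> * a"
proof (rule that[of "d / e" "a / e"])
  have "d / e * (d / e) + a / e * (a / e) = (d * d + a * a) / (e * e)"
    by (simp add: add_divide_distrib)
  then show "d / e * (d / e) + a / e * (a / e) = 1" using assms(1) by (simp flip: assms(2))
  have "d / e * d + a / e * a = (d * d + a * a) / e"
    by (simp add: add_divide_distrib)
  then show "d / e * d + a / e * a = e" using assms(1) by (simp flip: assms(2))
qed simp

context ring
begin

lemma ideal_minus_closed: "ideal I R \<Longrightarrow> a \<in> I \<Longrightarrow> b \<in> I \<Longrightarrow> a \<ominus> b \<in> I"
  unfolding minus_eq by (simp add: additive_subgroup.a_closed additive_subgroup.a_inv_closed ideal.axioms(1))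

lemma sums_of_squares_closed:
  assumes "P \<subseteq> carrier R" and "s \<in> sums_of_squares R P"
  shows "s \<in> carrier R"
  using assms(2) by (induction rule: sums_of_squares.induct) (use assms(1) in auto)

lemma sums_of_squares_subset_ideal:
  assumes "ideal I R"
  shows "sums_of_squares R I \<subseteq> I"
proof
  interpret I: ideal I R by fact
  show "s \<in> I" if "s \<in> sums_of_squares R I" for s
    using that by (induction rule: sums_of_squares.induct) (simp_all add: I.I_r_closed I.Icarr)
qed

lemma sums_of_squares_add:
  assumes P: "P \<subseteq> carrier R" and s: "s \<in> sums_of_squares R P"
    and "t \<in> sums_of_squares R P"
  shows "s \<oplus> t \<in> sums_of_squares R P"
  using assms(3)
proof (induction rule: sums_of_squares.induct)
  case zero
  have "s \<in> carrier R" using sums_of_squares_closed[OF P s] .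
  with s show ?case by simp
next
  case (add_square t x)
  have "s \<in> carrier R" "t \<in> carrier R" "x \<in> carrier R"
    using P s add_square.hyps sums_of_squares_closed by auto
  then have "s \<oplus> (t \<oplus> x \<otimes> x) = (s \<oplus> t) \<oplus> x \<otimes> x"
    by (simp add: a_assoc)
  with sums_of_squares.add_square[OF add_square.IH add_square.hyps(2)] show ?case by simp
qed

lemma square_in_sums_of_squares:
  assumes "P \<subseteq> carrier R" and "x \<in> P"
  shows "x \<otimes> x \<in> sums_of_squares R P"
  using sums_of_squares.add_square[OF sums_of_squares.zero[of R] assms(2)] assms by auto

lemma finsum_squares_Suc:
  assumes "g \<in> {..<Suc n} \<rightarrow> carrier R"
  shows "(\<Oplus>i\<in>{..<Suc n}. g i \<otimes> g i) = (\<Oplus>i\<in>{..<n}. g i \<otimes> g i) \<oplus> g n \<otimes> g n"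
proof -
  have "(\<Oplus>i\<in>{..<Suc n}. g i \<otimes> g i) = g n \<otimes> g n \<oplus> (\<Oplus>i\<in>{..<n}. g i \<otimes> g i)"
    unfolding lessThan_Suc by (rule finsum_insert) (use assms in auto)
  also have "\<dots> = (\<Oplus>i\<in>{..<n}. g i \<otimes> g i) \<oplus> g n \<otimes> g n"
  proof (rule a_comm)
    show "(\<Oplus>i\<in>{..<n}. g i \<otimes> g i) \<in> carrier R"
      using assms by (intro finsum_closed) auto
  qed (use assms in auto)
  finally show ?thesis .
qed

lemma sos_iff_sums_of_squares: "sos R s \<longleftrightarrow> s \<in> sums_of_squares R (carrier R)"
proof
  have "(\<Oplus>i\<in>{..<n}. g i \<otimes> g i) \<in> sums_of_squares R (carrier R)"
    if "g \<in> {..<n} \<rightarrow> carrier R" for n :: nat and g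
    using that
  proof (induction n)
    case 0
    then show ?case by (simp add: sums_of_squares.zero)
  next
    case (Suc n)
    have "g \<in> {..<n} \<rightarrow> carrier R" using Suc.prems by auto
    with Suc.IH have "(\<Oplus>i\<in>{..<n}. g i \<otimes> g i) \<in> sums_of_squares R (carrier R)" .
    moreover have "g n \<in> carrier R" using Suc.prems by auto
    ultimately show ?case
      unfolding finsum_squares_Suc[OF Suc.prems] by (rule sums_of_squares.add_square)
  qed
  then show "s \<in> sums_of_squares R (carrier R)" if "sos R s"
    using that unfolding sos_def by blast
next
  show "sos R s" if "s \<in> sums_of_squares R (carrier R)"
    using that
  proof (induction rule: sums_of_squares.induct)
    case zero
    show ?case unfolding sos_def by (intro exI[of _ 0] exI[of _ "\<lambda>_. \<zero>"]) auto
  next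
    case (add_square s x)
    then obtain n :: nat and g where g: "g \<in> {..<n} \<rightarrow> carrier R" "s = (\<Oplus>i\<in>{..<n}. g i \<otimes> g i)"
      unfolding sos_def by blast
    define h where "h = g(n := x)"
    have h: "h \<in> {..<Suc n} \<rightarrow> carrier R"
      using g(1) add_square.hyps(2) by (auto simp: h_def less_Suc_eq)
    have sum_h: "(\<Oplus>i\<in>{..<n}. h i \<otimes> h i) = s"
      unfolding g(2) by (rule finsum_cong') (use g(1) in \<open>auto simp: h_def\<close>)
    have "s \<oplus> x \<otimes> x = (\<Oplus>i\<in>{..<Suc n}. h i \<otimes> h i)"
      unfolding finsum_squares_Suc[OF h] sum_h by (simp add: h_def)
    with h show ?case unfolding sos_def by (intro exI[of _ "Suc n"] exI[of _ h] conjI)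
  qed
qed

lemma sums_of_squares_Quot:
  assumes "ideal I R" and "C \<in> sums_of_squares (R Quot I) (carrier (R Quot I))"
  shows "\<exists>S \<in> sums_of_squares R (carrier R). C = I +> S"
proof -
  interpret I: ideal I R by fact
  have hom: "(+>) I \<in> ring_hom R (R Quot I)" by (rule I.rcos_ring_hom)
  show ?thesis
    using assms(2)
  proof (induction rule: sums_of_squares.induct)
    case zero
    have "\<zero>\<^bsub>R Quot I\<^esub> = I +> \<zero>"
      using ring_hom_zero[OF hom ring_axioms I.quotient_is_ring] by simp
    then show ?case using sums_of_squares.zero[of R] by blast
  next
    case (add_square C Y)
    then obtain S where S: "S \<in> sums_of_squares R (carrier R)" "C = I +> S" by blast
    have Sc: "S \<in> carrier R" using sums_of_squares_closed[OF subset_refl S(1)] .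
    obtain a where a: "a \<in> carrier R" "Y = I +> a"
      using add_square.hyps(2) by (auto simp: FactRing_def A_RCOSETS_def')
    have "C \<oplus>\<^bsub>R Quot I\<^esub> Y \<otimes>\<^bsub>R Quot I\<^esub> Y = I +> (S \<oplus> a \<otimes> a)"
      using S(2) a Sc by (simp add: ring_hom_add[OF hom] ring_hom_mult[OF hom])
    then show ?case using sums_of_squares.add_square[OF S(1) a(1)] by blast
  qed
qed

lemma sos_Quot_imp_congruent_sums_of_squares:
  assumes "ideal I R" and "f \<in> carrier R" and "sos (R Quot I) (I +> f)"
  shows "\<exists>S \<in> sums_of_squares R (carrier R). f \<ominus> S \<in> I"
proof -
  interpret Q: ring "R Quot I" by (rule ideal.quotient_is_ring[OF assms(1)])
  obtain S where S: "S \<in> sums_of_squares R (carrier R)" "I +> f = I +> S"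
    using sums_of_squares_Quot[OF assms(1)] assms(3) Q.sos_iff_sums_of_squares by metis
  moreover have "S \<in> carrier R" using sums_of_squares_closed[OF subset_refl S(1)] .
  ultimately show ?thesis
    using quotient_eq_iff_same_a_r_cos[OF assms(1,2)] by blast
qed

end

context cring
begin

lemma ideal_minus_sym:
  assumes "ideal I R" and "a \<in> carrier R" and "b \<in> carrier R" and "a \<ominus> b \<in> I"
  shows "b \<ominus> a \<in> I"
proof -
  have "b \<ominus> a = \<ominus> (a \<ominus> b)" using assms(2,3) by algebra
  then show ?thesis
    using assms(1,4) by (simp add: additive_subgroup.a_inv_closed ideal.axioms(1))
qed

lemma ideal_minus_trans:
  assumes "ideal I R" and "a \<in> carrier R" and "b \<in> carrier R" and "c \<in> carrier R"
    and "a \<ominus> b \<in> I" and "b \<ominus> c \<in> I"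
  shows "a \<ominus> c \<in> I"
proof -
  have "a \<ominus> c = (a \<ominus> b) \<oplus> (b \<ominus> c)" using assms(2-4) by algebra
  then show ?thesis
    using assms(1,5,6) by (simp add: additive_subgroup.a_closed ideal.axioms(1))
qed

lemma ideal_square_diff:
  assumes "ideal I R" and "x \<in> carrier R" and "y \<in> carrier R" and "x \<ominus> y \<in> I"
  shows "x \<otimes> x \<ominus> y \<otimes> y \<in> I"
proof -
  have "x \<otimes> x \<ominus> y \<otimes> y = (x \<ominus> y) \<otimes> (x \<oplus> y)" using assms(2,3) by algebra
  then show ?thesis using assms by (simp add: ideal.I_r_closed)
qed

lemma sums_of_squares_set_add_congruent:
  assumes I: "ideal I R" and J: "ideal J R" and T: "T \<in> sums_of_squares R (I <+> J)"
  shows "\<exists>Y \<in> sums_of_squares R (carrier R). Y \<in> J \<and> Y \<ominus> T \<in> I"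
proof -
  interpret I: ideal I R by fact
  interpret J: ideal J R by fact
  have IJc: "I <+> J \<subseteq> carrier R" using ideal.Icarr[OF add_ideals[OF I J]] by blast
  show ?thesis
    using T
  proof (induction rule: sums_of_squares.induct)
    case zero
    show ?case using sums_of_squares.zero by (intro bexI[of _ \<zero>]) (auto simp: minus_eq)
  next
    case (add_square T r)
    then obtain Y where Y: "Y \<in> sums_of_squares R (carrier R)" "Y \<in> J" "Y \<ominus> T \<in> I" by blast
    obtain u v where uv: "u \<in> I" "v \<in> J" "r = u \<oplus> v"
      using add_square.hyps(2) by (auto simp: set_add_def')
    have carr: "u \<in> carrier R" "v \<in> carrier R" "Y \<in> carrier R" "T \<in> carrier R"
      using uv Y add_square.hyps(1) IJc I.Icarr J.Icarr sums_of_squares_closed by auto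
    \<comment> \<open>modulo \<open>I\<close>, the square of \<open>r = u + v\<close> is congruent to \<open>v\<^sup>2 \<in> J\<close>\<close>
    have "r \<ominus> v = u" unfolding uv(3) using carr by algebra
    then have "r \<otimes> r \<ominus> v \<otimes> v \<in> I"
      using uv carr by (intro ideal_square_diff[OF I]) auto
    moreover have "Y \<oplus> v \<otimes> v \<ominus> (T \<oplus> r \<otimes> r) = (Y \<ominus> T) \<ominus> (r \<otimes> r \<ominus> v \<otimes> v)"
      unfolding uv(3) using carr by algebra
    ultimately have "Y \<oplus> v \<otimes> v \<ominus> (T \<oplus> r \<otimes> r) \<in> I"
      using ideal_minus_closed[OF I Y(3)] by simp
    moreover have "Y \<oplus> v \<otimes> v \<in> J"
      using Y(2) uv(2) carr by (simp add: J.I_r_closed)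
    moreover have "Y \<oplus> v \<otimes> v \<in> sums_of_squares R (carrier R)"
      using sums_of_squares.add_square[OF Y(1)] carr by blast
    ultimately show ?case by blast
  qed
qed

lemma set_add_interpolate:
  assumes "ideal I R" and "ideal J R" and "q1 \<in> carrier R" and "q2 \<in> carrier R"
    and "q1 \<ominus> q2 \<in> I <+> J"
  obtains x where "x \<in> carrier R" "x \<ominus> q1 \<in> I" "x \<ominus> q2 \<in> J"
proof -
  obtain u v where uv: "u \<in> I" "v \<in> J" "q1 \<ominus> q2 = u \<oplus> v"
    using assms(5) by (auto simp: set_add_def')
  then have uvc: "u \<in> carrier R" "v \<in> carrier R"
    using ideal.Icarr[OF assms(1)] ideal.Icarr[OF assms(2)] by auto
  have "q2 \<oplus> v \<ominus> q1 = v \<ominus> (q1 \<ominus> q2)" using assms(3,4) uvc by algebra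
  also have "\<dots> = \<ominus> u" unfolding uv(3) using uvc by algebra
  finally have "q2 \<oplus> v \<ominus> q1 \<in> I"
    using uv(1) assms(1) by (simp add: additive_subgroup.a_inv_closed ideal.axioms(1))
  moreover have "q2 \<oplus> v \<ominus> q2 = v" using assms(4) uvc by algebra
  ultimately show ?thesis using that[of "q2 \<oplus> v"] assms(4) uvc uv(2) by simp
qed

lemma sums_of_squares_glue:
  assumes I: "ideal I R" and J: "ideal J R" and IJ: "I \<inter> J = {\<zero>}"
    and carr: "f \<in> carrier R" "q1 \<in> carrier R" "q2 \<in> carrier R"
    and T1: "T1 \<in> sums_of_squares R (I <+> J)" and T2: "T2 \<in> sums_of_squares R (I <+> J)"
    and q: "q1 \<ominus> q2 \<in> I <+> J"
    and f1: "f \<ominus> (q1 \<otimes> q1 \<oplus> T1) \<in> I" and f2: "f \<ominus> (q2 \<otimes> q2 \<oplus> T2) \<in> J"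
  shows "f \<in> sums_of_squares R (carrier R)"
proof -
  interpret I: ideal I R by fact
  interpret J: ideal J R by fact
  have IJc: "I <+> J \<subseteq> carrier R" using ideal.Icarr[OF add_ideals[OF I J]] by blast
  obtain x where x: "x \<in> carrier R" "x \<ominus> q1 \<in> I" "x \<ominus> q2 \<in> J"
    using set_add_interpolate[OF I J carr(2,3) q] .
  obtain Y1 where Y1: "Y1 \<in> sums_of_squares R (carrier R)" "Y1 \<in> J" "Y1 \<ominus> T1 \<in> I"
    using sums_of_squares_set_add_congruent[OF I J T1] by blast
  have "T2 \<in> sums_of_squares R (J <+> I)"
    using T2 set_add_comm[OF I.a_subset J.a_subset] by simp
  then obtain Y2 where Y2: "Y2 \<in> sums_of_squares R (carrier R)" "Y2 \<in> I" "Y2 \<ominus> T2 \<in> J"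
    using sums_of_squares_set_add_congruent[OF J I] by blast
  have Yc: "Y1 \<in> carrier R" "Y2 \<in> carrier R" "T1 \<in> carrier R" "T2 \<in> carrier R"
    using sums_of_squares_closed[OF subset_refl Y1(1)] sums_of_squares_closed[OF subset_refl Y2(1)]
      sums_of_squares_closed[OF IJc T1] sums_of_squares_closed[OF IJc T2] by auto
  define s where "s = x \<otimes> x \<oplus> Y1 \<oplus> Y2"
  have "x \<otimes> x \<in> sums_of_squares R (carrier R)"
    using x(1) by (intro square_in_sums_of_squares) auto
  then have s_sos: "s \<in> sums_of_squares R (carrier R)"
    unfolding s_def by (intro sums_of_squares_add[OF subset_refl] Y1(1) Y2(1))
  have "s \<ominus> f = (x \<otimes> x \<ominus> q1 \<otimes> q1) \<oplus> (Y1 \<ominus> T1) \<oplus> Y2 \<ominus> (f \<ominus> (q1 \<otimes> q1 \<oplus> T1))"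
    unfolding s_def using carr x(1) Yc by algebra
  also have "\<dots> \<in> I"
    using ideal_square_diff[OF I x(1) carr(2) x(2)] Y1(3) Y2(2) f1
    by (blast intro: ideal_minus_closed[OF I] I.a_closed)
  finally have sI: "s \<ominus> f \<in> I" .
  have "s \<ominus> f = (x \<otimes> x \<ominus> q2 \<otimes> q2) \<oplus> Y1 \<oplus> (Y2 \<ominus> T2) \<ominus> (f \<ominus> (q2 \<otimes> q2 \<oplus> T2))"
    unfolding s_def using carr x(1) Yc by algebra
  also have "\<dots> \<in> J"
    using ideal_square_diff[OF J x(1) carr(3) x(3)] Y1(2) Y2(3) f2
    by (blast intro: ideal_minus_closed[OF J] J.a_closed)
  finally have "s \<ominus> f \<in> J" .
  with sI IJ have "s \<ominus> f = \<zero>" by blast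
  moreover have "s \<in> carrier R" using sums_of_squares_closed[OF subset_refl s_sos] .
  ultimately have "s = f" using carr(1) r_right_minus_eq by blast
  with s_sos show ?thesis by blast
qed

end

locale real_point = cring R for R :: "('a, 'b) ring_scheme" (structure) +
  fixes phi :: "'r::field \<Rightarrow> 'a" and m :: "'a set"
  assumes real_closed: "real_closed_field TYPE('r)"
    and algebra_map: "algebra_map phi R"
    and point: "real_point_ideal phi m R"
begin

lemma phi_closed [simp]: "phi c \<in> carrier R"
  and phi_add [simp]: "phi (c + d) = phi c \<oplus> phi d"
  and phi_mult [simp]: "phi (c * d) = phi c \<otimes> phi d"
  and phi_zero [simp]: "phi 0 = \<zero>"
  and phi_one [simp]: "phi 1 = \<one>"
  using algebra_map unfolding algebra_map_def by auto

lemma phi_diff [simp]: "phi (c - d) = phi c \<ominus> phi d"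
proof -
  have "phi (c - d) = (phi (c - d) \<oplus> phi d) \<ominus> phi d"
    using phi_closed[of "c - d"] phi_closed[of d] by algebra
  also have "phi (c - d) \<oplus> phi d = phi c" by (simp flip: phi_add)
  finally show ?thesis .
qed

lemma phi_uminus [simp]: "phi (- c) = \<ominus> phi c"
  using phi_diff[of 0 c] by (simp add: minus_eq)

lemma point_ideal: "ideal m R"
  using point maximalideal.axioms(1) unfolding real_point_ideal_def by blast

interpretation m: ideal m R by (rule point_ideal)

lemma point_residue: "a \<in> carrier R \<Longrightarrow> \<exists>c. a \<ominus> phi c \<in> m"
  using point unfolding real_point_ideal_def by blast

lemma phi_in_point_iff [simp]: "phi c \<in> m \<longleftrightarrow> c = 0"
proof
  assume "phi c \<in> m"
  show "c = 0"
  proof (rule ccontr)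
    assume "c \<noteq> 0"
    then have "phi (inverse c) \<otimes> phi c = \<one>" by (simp flip: phi_mult)
    with \<open>phi c \<in> m\<close> have "\<one> \<in> m" by (metis m.I_l_closed phi_closed)
    then show False
      using point m.one_imp_carrier maximalideal.I_notcarr unfolding real_point_ideal_def by blast
  qed
qed simp

lemma point_residue_unique:
  assumes "a \<in> carrier R" and "a \<ominus> phi c \<in> m" and "a \<ominus> phi d \<in> m"
  shows "c = d"
proof -
  have "phi (d - c) = (a \<ominus> phi c) \<ominus> (a \<ominus> phi d)"
    unfolding phi_diff using assms(1) phi_closed[of c] phi_closed[of d] by algebra
  also have "\<dots> \<in> m" using assms(2,3) by (rule ideal_minus_closed[OF point_ideal])
  finally have "d - c = 0" by (simp only: phi_in_point_iff)
  then show ?thesis by simp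
qed

lemma square_plus_point_residue:
  assumes "q \<in> carrier R" and "q \<ominus> phi d \<in> m" and "T \<in> sums_of_squares R m"
  shows "q \<otimes> q \<oplus> T \<ominus> phi (d * d) \<in> m"
proof -
  have T: "T \<in> m" using sums_of_squares_subset_ideal[OF point_ideal] assms(3) by blast
  have "q \<otimes> q \<oplus> T \<ominus> phi (d * d) = (q \<ominus> phi d) \<otimes> (q \<oplus> phi d) \<oplus> T"
    unfolding phi_mult using assms(1) m.Icarr[OF T] phi_closed[of d] by algebra
  also have "\<dots> \<in> m"
    using assms(1,2) T by (simp add: m.I_r_closed)
  finally show ?thesis .
qed

lemma rotate_two_squares:
  assumes q: "q \<in> carrier R" "q \<ominus> phi d \<in> m" and g: "g \<in> carrier R"
  obtains q' r e where "q' \<in> carrier R" "q' \<ominus> phi e \<in> m" "r \<in> m"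
    "q \<otimes> q \<oplus> g \<otimes> g = q' \<otimes> q' \<oplus> r \<otimes> r"
proof -
  obtain a where a: "g \<ominus> phi a \<in> m" using point_residue g by blast
  obtain e where e: "e * e = d * d + a * a"
    using real_closed_field_sum_two_squares_square[OF real_closed] by blast
  show ?thesis
  proof (cases "e = 0")
    case True
    then have "a = 0" using e real_closed_field_sum_two_squares_eq_0[OF real_closed, of d a] by simp
    then have "g \<in> m" using a g by (simp add: minus_eq)
    with q g show ?thesis by (intro that[of q d g]) auto
  next
    case False
    obtain \<alpha> \<beta> where \<alpha>\<beta>: "\<alpha> * \<alpha> + \<beta> * \<beta> = 1" "\<alpha> * d + \<beta> * a = e" "\<beta> * d = \<alpha> * a"
      by (rule field_rotation_coefficients[OF False e])
    \<comment> \<open>the orthogonal matrix with rows \<open>(\<alpha>, \<beta>)\<close>, \<open>(\<beta>, -\<alpha>)\<close> moves the residues \<open>(d, a)\<close> of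
      \<open>(q, g)\<close> to \<open>(e, 0)\<close>\<close>
    define q' r where "q' = phi \<alpha> \<otimes> q \<oplus> phi \<beta> \<otimes> g" and "r = phi \<beta> \<otimes> q \<ominus> phi \<alpha> \<otimes> g"
    have carr: "q' \<in> carrier R" "r \<in> carrier R"
      using q g by (simp_all add: q'_def r_def)
    have "q' \<otimes> q' \<oplus> r \<otimes> r = (phi \<alpha> \<otimes> phi \<alpha> \<oplus> phi \<beta> \<otimes> phi \<beta>) \<otimes> (q \<otimes> q \<oplus> g \<otimes> g)"
      unfolding q'_def r_def using q(1) g phi_closed[of \<alpha>] phi_closed[of \<beta>] by algebra
    also have "phi \<alpha> \<otimes> phi \<alpha> \<oplus> phi \<beta> \<otimes> phi \<beta> = \<one>"
      using \<alpha>\<beta>(1) by (simp flip: phi_mult phi_add)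
    finally have sq: "q \<otimes> q \<oplus> g \<otimes> g = q' \<otimes> q' \<oplus> r \<otimes> r"
      using q(1) g by simp
    have "q' \<ominus> phi e = phi \<alpha> \<otimes> (q \<ominus> phi d) \<oplus> phi \<beta> \<otimes> (g \<ominus> phi a)"
      unfolding q'_def \<alpha>\<beta>(2)[symmetric] phi_add phi_mult
      using q(1) g phi_closed[of \<alpha>] phi_closed[of \<beta>] phi_closed[of d] phi_closed[of a] by algebra
    also have "\<dots> \<in> m"
      using q(2) a by (simp add: m.I_l_closed)
    finally have q': "q' \<ominus> phi e \<in> m" .
    have "r = phi \<beta> \<otimes> (q \<ominus> phi d) \<ominus> phi \<alpha> \<otimes> (g \<ominus> phi a) \<oplus> (phi \<beta> \<otimes> phi d \<ominus> phi \<alpha> \<otimes> phi a)"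
      unfolding r_def
      using q(1) g phi_closed[of \<alpha>] phi_closed[of \<beta>] phi_closed[of d] phi_closed[of a] by algebra
    also have "phi \<beta> \<otimes> phi d \<ominus> phi \<alpha> \<otimes> phi a = \<zero>"
      using \<alpha>\<beta>(3) by (simp flip: phi_mult phi_diff)
    finally have "r = phi \<beta> \<otimes> (q \<ominus> phi d) \<ominus> phi \<alpha> \<otimes> (g \<ominus> phi a)"
      using q(1) g by simp
    also have "\<dots> \<in> m"
      by (rule ideal_minus_closed[OF point_ideal]) (use q(2) a in \<open>simp_all add: m.I_l_closed\<close>)
    finally show ?thesis using that carr q' sq by blast
  qed
qed

lemma sums_of_squares_point_decomposition:
  assumes "S \<in> sums_of_squares R (carrier R)"
  shows "\<exists>q d T. q \<in> carrier R \<and> q \<ominus> phi d \<in> m \<and> T \<in> sums_of_squares R m \<and> S = q \<otimes> q \<oplus> T"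
  using assms
proof (induction rule: sums_of_squares.induct)
  case zero
  have "\<zero> \<ominus> phi 0 \<in> m" by (simp add: minus_eq)
  then show ?case
    using sums_of_squares.zero[of R m] by (intro exI[of _ \<zero>] exI[of _ 0] exI[of _ \<zero>]) simp
next
  case (add_square S g)
  then obtain q d T where H: "q \<in> carrier R" "q \<ominus> phi d \<in> m" "T \<in> sums_of_squares R m"
    "S = q \<otimes> q \<oplus> T" by blast
  obtain q' r e where rot: "q' \<in> carrier R" "q' \<ominus> phi e \<in> m" "r \<in> m"
    "q \<otimes> q \<oplus> g \<otimes> g = q' \<otimes> q' \<oplus> r \<otimes> r"
    using rotate_two_squares[OF H(1,2) add_square.hyps(2)] .
  have carr: "T \<in> carrier R" "r \<in> carrier R"
    using sums_of_squares_closed[OF m.a_subset H(3)] m.Icarr[OF rot(3)] by auto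
  have "S \<oplus> g \<otimes> g = (q \<otimes> q \<oplus> g \<otimes> g) \<oplus> T"
    unfolding H(4) using H(1) add_square.hyps(2) carr by algebra
  also have "\<dots> = q' \<otimes> q' \<oplus> (T \<oplus> r \<otimes> r)"
    unfolding rot(4) using rot(1) carr by algebra
  finally have "S \<oplus> g \<otimes> g = q' \<otimes> q' \<oplus> (T \<oplus> r \<otimes> r)" .
  with rot(1,2) sums_of_squares.add_square[OF H(3) rot(3)] show ?case
    by (intro exI[of _ q'] exI[of _ e] exI[of _ "T \<oplus> r \<otimes> r"]) simp
qed

lemma sums_of_squares_point_residue:
  assumes "S \<in> sums_of_squares R (carrier R)"
  shows "\<exists>d. S \<ominus> phi (d * d) \<in> m"
proof -
  obtain q d T where H: "q \<in> carrier R" "q \<ominus> phi d \<in> m" "T \<in> sums_of_squares R m"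
    "S = q \<otimes> q \<oplus> T" using sums_of_squares_point_decomposition[OF assms] by blast
  have "S \<ominus> phi (d * d) \<in> m"
    unfolding H(4) using H(1-3) by (rule square_plus_point_residue)
  then show ?thesis ..
qed

lemma sums_of_squares_point_decomposition_at:
  assumes S: "S \<in> sums_of_squares R (carrier R)" and c: "S \<ominus> phi (c * c) \<in> m"
  obtains q T where "q \<in> carrier R" "q \<ominus> phi c \<in> m" "T \<in> sums_of_squares R m" "S = q \<otimes> q \<oplus> T"
proof -
  obtain q d T where H: "q \<in> carrier R" "q \<ominus> phi d \<in> m" "T \<in> sums_of_squares R m"
    "S = q \<otimes> q \<oplus> T" using sums_of_squares_point_decomposition[OF S] by blast
  have "S \<ominus> phi (d * d) \<in> m"
    unfolding H(4) using H(1-3) by (rule square_plus_point_residue)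
  with c have "c * c = d * d"
    by (rule point_residue_unique[OF sums_of_squares_closed[OF subset_refl S]])
  then consider "d = c" | "d = - c" by (auto simp: square_eq_iff)
  then show ?thesis
  proof cases
    case 1
    with H show ?thesis by (intro that) auto
  next
    case 2
    have "\<ominus> q \<ominus> phi c = \<ominus> (q \<ominus> phi d)"
      unfolding 2 phi_uminus using H(1) phi_closed[of c] by algebra
    then have "\<ominus> q \<ominus> phi c \<in> m" using H(2) by simp
    moreover have "\<ominus> q \<otimes> \<ominus> q = q \<otimes> q" using H(1) by algebra
    ultimately show ?thesis using H by (intro that[of "\<ominus> q" T]) auto
  qed
qed

theorem sos_of_sos_on_transversal_components:
  assumes I1: "ideal I1 R" and I2: "ideal I2 R" and int: "I1 \<inter> I2 = {\<zero>}"
    and sum: "I1 <+> I2 = m" and f: "f \<in> carrier R"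
    and sos1: "sos (R Quot I1) (I1 +> f)" and sos2: "sos (R Quot I2) (I2 +> f)"
  shows "sos R f"
proof -
  have "I1 \<union> I2 \<subseteq> m"
    using genideal_self[of "I1 \<union> I2"] ideal.Icarr[OF I1] ideal.Icarr[OF I2]
    unfolding union_genideal[OF I1 I2] sum by auto
  obtain S1 where S1: "S1 \<in> sums_of_squares R (carrier R)" "f \<ominus> S1 \<in> I1"
    using sos_Quot_imp_congruent_sums_of_squares[OF I1 f sos1] by blast
  obtain S2 where S2: "S2 \<in> sums_of_squares R (carrier R)" "f \<ominus> S2 \<in> I2"
    using sos_Quot_imp_congruent_sums_of_squares[OF I2 f sos2] by blast
  have Sc: "S1 \<in> carrier R" "S2 \<in> carrier R"
    using sums_of_squares_closed[OF subset_refl] S1(1) S2(1) by auto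
  have fS: "f \<ominus> S1 \<in> m" "S2 \<ominus> f \<in> m"
    using S1(2) S2(2) \<open>I1 \<union> I2 \<subseteq> m\<close> ideal_minus_sym[OF point_ideal f Sc(2)] by auto
  obtain d where d1: "S1 \<ominus> phi (d * d) \<in> m"
    using sums_of_squares_point_residue[OF S1(1)] by blast
  then have "f \<ominus> phi (d * d) \<in> m"
    using ideal_minus_trans[OF point_ideal f Sc(1) phi_closed fS(1)] by blast
  then have d2: "S2 \<ominus> phi (d * d) \<in> m"
    using ideal_minus_trans[OF point_ideal Sc(2) f phi_closed fS(2)] by blast
  \<comment> \<open>giving both leading terms the residue \<open>d\<close> (not \<open>-d\<close>) puts \<open>q1 - q2\<close> into \<open>m = I1 + I2\<close>\<close>
  obtain q2 T2 where D2: "q2 \<in> carrier R" "q2 \<ominus> phi d \<in> m" "T2 \<in> sums_of_squares R m"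
    "S2 = q2 \<otimes> q2 \<oplus> T2" using sums_of_squares_point_decomposition_at[OF S2(1) d2] .
  obtain q1 T1 where D1: "q1 \<in> carrier R" "q1 \<ominus> phi d \<in> m" "T1 \<in> sums_of_squares R m"
    "S1 = q1 \<otimes> q1 \<oplus> T1" using sums_of_squares_point_decomposition_at[OF S1(1) d1] .
  have "q1 \<ominus> q2 \<in> m"
    using ideal_minus_trans[OF point_ideal D1(1) phi_closed D2(1) D1(2)]
      ideal_minus_sym[OF point_ideal D2(1) phi_closed D2(2)] by blast
  then have "f \<in> sums_of_squares R (carrier R)"
    using sums_of_squares_glue[OF I1 I2 int f D1(1) D2(1)] D1 D2 S1(2) S2(2) unfolding sum by simp
  then show ?thesis by (simp add: sos_iff_sums_of_squares)
qed

end

theorem proposition2p2: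
  fixes phi :: "'r::field \<Rightarrow> 'a" and A :: "('a, 'b) ring_scheme"
    and I1 I2 m :: "'a set" and f :: 'a
  assumes "real_closed_field TYPE('r)"
    and "affine_coordinate_ring phi A"
    and "radical_ideal I1 A" and "radical_ideal I2 A"
    and "I1 \<inter> I2 = {\<zero>\<^bsub>A\<^esub>}"
    and "real_point_ideal phi m A"
    and "I1 <+>\<^bsub>A\<^esub> I2 = m"
    and "f \<in> carrier A"
    and "sos (A Quot I1) (I1 +>\<^bsub>A\<^esub> f)"
    and "sos (A Quot I2) (I2 +>\<^bsub>A\<^esub> f)"
  shows "sos A f"
proof -
  have "algebra_map phi A"
    using assms(2) unfolding affine_coordinate_ring_def by blast
  then interpret real_point A phi m
    using assms(1,6) by (simp add: real_point_def real_point_axioms_def algebra_map_def)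
  show ?thesis
    using sos_of_sos_on_transversal_components assms(3-10) unfolding radical_ideal_def by blast
qed

end
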